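(* Let $n$ be a positive integer. For every rational number $x$ with $1/(n+1)<x<1/n$, we have $\mathcal{I}(1/(n+1))<\mathcal{I}(x)<\mathcal{I}(1/n)$.
   Context: For $x\in\mathbb{R}$ let $\{x\}=x-\lfloor x\rfloor$. The interrobang function $\mathcal{I}\colon[0,1]\cap\mathbb{Q}\to\mathbb{R}$ is defined recursively by $\mathcal{I}(0)=0$; $\mathcal{I}(x)=4^{-\lfloor1/x\rfloor}\big(1-2\,\mathcal{I}(\{1/x\})\big)$ if $0<x\le\tfrac12$; and $\mathcal{I}(x)=\tfrac38-\tfrac34\,\mathcal{I}(1/x-1)-\tfrac12\,\mathcal{I}(1-x)$ if $\tfrac12<x\le1$. The recursion is well founded: with the height $a/b\mapsto|a|+|b|$ ($\gcd(a,b)=1$), every argument on the right-hand side has strictly smaller height than $x$, so $\mathcal{I}$ is uniquely defined. *)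

theory Defs
  imports Complex_Main
begin

text \<open>Auxiliary function on numerator/denominator pairs: F a b represents the
  interrobang function at a/b, for 0 \<le> a \<le> b, b > 0 (values outside are junk).
  The recursion mirrors the three defining clauses; it is independent of the
  representative of the fraction.\<close>

function interro_aux :: "nat \<Rightarrow> nat \<Rightarrow> real" where
  "interro_aux a b =
     (if a = 0 \<or> b = 0 \<or> b < a then 0
      else if 2 * a \<le> b then
        (1/4) ^ (b div a) * (1 - 2 * interro_aux (b mod a) a)
      else 3/8 - 3/4 * interro_aux (b - a) a - 1/2 * interro_aux (b - a) b)"
  by pat_completeness auto
termination
  by (relation "measure (\<lambda>(a, b). a + b)") (auto intro: less_le_trans[OF mod_less_divisor])

definition interrobang :: "rat \<Rightarrow> real" where
  "interrobang x = (case quotient_of x of (p, q) \<Rightarrow> interro_aux (nat p) (nat q))"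

end

theory Submission
  imports Defs
begin

text \<open>For \<open>1/(n+1) < x < 1/n\<close> with \<open>n \<ge> 2\<close> the first clause applies with \<open>\<lfloor>1/x\<rfloor> = n\<close> and
  \<open>{1/x} \<noteq> 0\<close>, so \<open>I(x) = 4^(-n) (1 - 2t)\<close> with \<open>t = I({1/x})\<close>. A simultaneous induction
  shows that \<open>I\<close> takes values in \<open>[0, 3/8]\<close>, and in \<open>[0, 1/16]\<close> on \<open>[0, 1/2]\<close>; this
  forces \<open>0 < t < 3/8\<close>, hence \<open>4^(-n-1) < I(x) < 4^(-n)\<close>, and these bounds are exactly
  \<open>I(1/(n+1))\<close> and \<open>I(1/n)\<close>. For \<open>n = 1\<close> the second clause together with the same
  bounds gives \<open>1/16 < I(x) < 3/8 = I(1)\<close>.\<close>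

declare interro_aux.simps[simp del]

lemma interro_aux_0_left [simp]: "interro_aux 0 b = 0"
  by (simp add: interro_aux.simps)

lemma interro_aux_small:
  "0 < a \<Longrightarrow> 2 * a \<le> b \<Longrightarrow>
    interro_aux a b = (1/4) ^ (b div a) * (1 - 2 * interro_aux (b mod a) a)"
  by (subst interro_aux.simps) simp

lemma interro_aux_large:
  "0 < a \<Longrightarrow> a \<le> b \<Longrightarrow> b < 2 * a \<Longrightarrow>
    interro_aux a b = 3/8 - 3/4 * interro_aux (b - a) a - 1/2 * interro_aux (b - a) b"
  by (subst interro_aux.simps) simp

lemma interro_aux_diag: "0 < a \<Longrightarrow> interro_aux a a = 3/8"
  by (simp add: interro_aux_large)

lemma interro_aux_1_left: "2 \<le> m \<Longrightarrow> interro_aux 1 m = (1/4) ^ m"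
  by (simp add: interro_aux_small)

lemma interro_aux_range:
  assumes "a \<le> b" "0 < b"
  shows "0 \<le> interro_aux a b \<and> interro_aux a b \<le> 3/8
    \<and> (2 * a \<le> b \<longrightarrow> interro_aux a b \<le> 1/16)"
  using assms
proof (induction a b rule: interro_aux.induct)
  case (1 a b)
  consider "a = 0" | "0 < a" "2 * a \<le> b" | "0 < a" "b < 2 * a"
    by linarith
  then show ?case
  proof cases
    case 1
    then show ?thesis by simp
  next
    case small: 2
    have t: "0 \<le> interro_aux (b mod a) a" "interro_aux (b mod a) a \<le> 3/8"
      using "1.IH"(1) small by (auto simp: less_imp_le)
    have "2 \<le> b div a"
      using small by (metis div_le_mono mult.commute nonzero_mult_div_cancel_left not_gr0)
    then have "(1/4::real) ^ (b div a) \<le> (1/4) ^ 2"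
      by (rule power_decreasing) auto
    moreover have "interro_aux a b \<le> (1/4) ^ (b div a)"
      unfolding interro_aux_small[OF small] by (rule mult_left_le) (use t in auto)
    moreover have "0 \<le> interro_aux a b"
      unfolding interro_aux_small[OF small] using t by simp
    ultimately show ?thesis
      by (simp add: power2_eq_square)
  next
    case large: 3
    have s: "0 \<le> interro_aux (b - a) a" "interro_aux (b - a) a \<le> 3/8"
      using "1.IH"(2) large "1.prems" by auto
    have u: "0 \<le> interro_aux (b - a) b" "interro_aux (b - a) b \<le> 1/16"
      using "1.IH"(3) large "1.prems" by auto
    from s u show ?thesis
      using large "1.prems" by (simp add: interro_aux_large)
  qed
qed

lemma interro_aux_pos:
  assumes "0 < a" "a \<le> b"
  shows "0 < interro_aux a b"
proof (cases "2 * a \<le> b")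
  case True
  have "interro_aux (b mod a) a \<le> 3/8"
    using interro_aux_range[of "b mod a" a] assms by simp
  then show ?thesis
    using True assms by (simp add: interro_aux_small)
next
  case False
  have "interro_aux (b - a) a \<le> 3/8" "interro_aux (b - a) b \<le> 1/16"
    using interro_aux_range[of "b - a" a] interro_aux_range[of "b - a" b] False assms by auto
  then show ?thesis
    using False assms by (simp add: interro_aux_large)
qed

lemma interro_aux_less_3_8:
  assumes "0 < a" "a < b"
  shows "interro_aux a b < 3/8"
proof (cases "2 * a \<le> b")
  case True
  then show ?thesis
    using interro_aux_range[of a b] assms by simp
next
  case False
  have "0 < interro_aux (b - a) a" "0 \<le> interro_aux (b - a) b"
    using interro_aux_pos[of "b - a" a] interro_aux_range[of "b - a" b] False assms by auto
  then show ?thesis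
    using False assms by (simp add: interro_aux_large)
qed

lemma interro_aux_large_gt_1_16:
  assumes "0 < a" "a < b" "b < 2 * a"
  shows "1/16 < interro_aux a b"
proof -
  have "interro_aux (b - a) a < 3/8" "interro_aux (b - a) b \<le> 1/16"
    using interro_aux_less_3_8[of "b - a" a] interro_aux_range[of "b - a" b] assms by auto
  then show ?thesis
    using assms by (simp add: interro_aux_large)
qed

lemma interro_aux_small_bounds:
  assumes "0 < a" "2 * a \<le> b" "b mod a \<noteq> 0"
  shows "(1/4) ^ (b div a + 1) < interro_aux a b" "interro_aux a b < (1/4) ^ (b div a)"
proof -
  have t: "0 < interro_aux (b mod a) a" "interro_aux (b mod a) a < 3/8"
    using interro_aux_pos[of "b mod a" a] interro_aux_less_3_8[of "b mod a" a] assms by auto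
  show "(1/4) ^ (b div a + 1) < interro_aux a b" "interro_aux a b < (1/4) ^ (b div a)"
    using t assms by (simp_all add: interro_aux_small mult_less_cancel_left1 mult_less_cancel_left)
qed

lemma interro_aux_between_inverses:
  assumes "0 < n" "n * a < b" "b < (n + 1) * a"
  shows "interro_aux 1 (n + 1) < interro_aux a b \<and> interro_aux a b < interro_aux 1 n"
proof (cases "n = 1")
  case True
  then have "0 < a" "a < b" "b < 2 * a"
    using assms by auto
  then have "1/16 < interro_aux a b" "interro_aux a b < 3/8"
    using interro_aux_large_gt_1_16 interro_aux_less_3_8 by blast+
  moreover have "interro_aux 1 (n + 1) = 1/16" "interro_aux 1 n = 3/8"
    using True interro_aux_1_left[of "n + 1"] interro_aux_diag[of n] by simp_all
  ultimately show ?thesis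
    by simp
next
  case False
  then have "2 \<le> n" "0 < a"
    using assms by auto
  then have "2 * a \<le> b"
    using assms(2) by (metis less_imp_le_nat mult_le_mono1 order_trans)
  moreover have "b div a = n"
    using assms by (intro div_nat_eqI) (simp_all add: mult.commute)
  moreover have "b mod a \<noteq> 0"
    using assms(2) \<open>b div a = n\<close> by (metis add_0_right div_mult_mod_eq less_irrefl mult.commute)
  ultimately show ?thesis
    using interro_aux_small_bounds[of a b] interro_aux_1_left[of n] interro_aux_1_left[of "n + 1"]
      \<open>2 \<le> n\<close> \<open>0 < a\<close>
    by simp
qed

lemma interrobang_inverse_of_nat:
  assumes "0 < m"
  shows "interrobang (1 / of_nat m) = interro_aux 1 m"
proof -
  have "1 / of_nat m = Fract 1 (int m)"
    by (simp add: Fract_of_int_quotient)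
  then have "quotient_of (1 / of_nat m) = (1, int m)"
    using assms by (simp add: quotient_of_Fract normalize_def)
  then show ?thesis
    by (simp add: interrobang_def)
qed

lemma interrobang_as_fraction:
  assumes "0 < x"
  obtains a b where "0 < b" "x = of_nat a / of_nat b" "interrobang x = interro_aux a b"
proof -
  obtain p q where pq: "quotient_of x = (p, q)"
    by force
  have "0 < q" "x = of_int p / of_int q"
    using quotient_of_denom_pos[OF pq] quotient_of_div[OF pq] .
  moreover from this have "0 < p"
    using assms by (simp add: zero_less_divide_iff)
  ultimately show ?thesis
    using that[of "nat q" "nat p"] pq by (simp add: interrobang_def)
qed

theorem mainTheorem8:
  fixes n :: nat and x :: rat
  assumes "n \<ge> 1"
    and "1 / rat_of_nat (n + 1) < x" and "x < 1 / rat_of_nat n"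
  shows "interrobang (1 / rat_of_nat (n + 1)) < interrobang x
       \<and> interrobang x < interrobang (1 / rat_of_nat n)"
proof -
  have "0 < x"
    using assms(2) by (rule less_trans[rotated]) simp
  then obtain a b where b: "0 < b" and x: "x = of_nat a / of_nat b"
    and I: "interrobang x = interro_aux a b"
    by (rule interrobang_as_fraction)
  have "rat_of_nat b < of_nat ((n + 1) * a)" "rat_of_nat (n * a) < of_nat b"
    using assms b unfolding x by (simp_all add: field_simps)
  then have "b < (n + 1) * a" "n * a < b"
    by (simp_all only: of_nat_less_iff)
  moreover have "0 < n" "0 < n + 1"
    using assms(1) by simp_all
  ultimately show ?thesis
    unfolding I interrobang_inverse_of_nat[OF \<open>0 < n\<close>] interrobang_inverse_of_nat[OF \<open>0 < n + 1\<close>]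
    by (intro interro_aux_between_inverses)
qed

end
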